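(* Let $A$ and $B$ be C$^*$-algebras, where $A$ is unital with unit $1$. Let $p$ be a projection in $A$ and let $T:A\to B$ be a linear map which is a $^*$-homomorphism at $p$ and at $1-p$. Then $T$ is a Jordan $^*$-homomorphism.
   Context: A map $T:A\to B$ between C$^*$-algebras is a $^*$-homomorphism at $z\in A$ if for all $a,b\in A$ with $ab^*=z$ one has $T(ab^* )=T(a)T(b)^*=T(z)$, and for all $c,d\in A$ with $c^*d=z$ one has $T(c^*d)=T(c)^*T(d)=T(z)$. A Jordan $^*$-homomorphism is a linear map $T$ with $T(a\circ b)=T(a)\circ T(b)$ for all $a,b$, where $a\circ b=\frac12(ab+ba)$, and $T(x^* )=T(x)^*$ for all $x$. *)

theory Defs
  imports "HOL-Analysis.Analysis"
begin

text \<open>Complex Banach *-algebras satisfying the C*-identity (C*-algebras).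
  The real scalar multiplication coming from the library is required to be the
  restriction of the complex one.\<close>

class cstar_algebra = real_normed_algebra + banach +
  fixes scaleC :: "complex \<Rightarrow> 'a \<Rightarrow> 'a"
    and adj :: "'a \<Rightarrow> 'a"
  assumes scaleC_add_right: "scaleC c (x + y) = scaleC c x + scaleC c y"
    and scaleC_add_left: "scaleC (c + d) x = scaleC c x + scaleC d x"
    and scaleC_scaleC: "scaleC c (scaleC d x) = scaleC (c * d) x"
    and scaleC_one: "scaleC 1 x = x"
    and scaleR_scaleC: "scaleR r x = scaleC (of_real r) x"
    and scaleC_mult_left: "scaleC c x * y = scaleC c (x * y)"
    and scaleC_mult_right: "x * scaleC c y = scaleC c (x * y)"
    and norm_scaleC: "norm (scaleC c x) = cmod c * norm x"
    and adj_adj: "adj (adj x) = x"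
    and adj_add: "adj (x + y) = adj x + adj y"
    and adj_scaleC: "adj (scaleC c x) = scaleC (cnj c) (adj x)"
    and adj_mult: "adj (x * y) = adj y * adj x"
    and cstar_identity: "norm (adj x * x) = (norm x)\<^sup>2"

class cstar_algebra_1 = cstar_algebra + ring_1

definition complex_linear :: "('a::cstar_algebra \<Rightarrow> 'b::cstar_algebra) \<Rightarrow> bool" where
  "complex_linear T \<longleftrightarrow>
     (\<forall>x y. T (x + y) = T x + T y) \<and> (\<forall>c x. T (scaleC c x) = scaleC c (T x))"

definition is_projection :: "'a::cstar_algebra \<Rightarrow> bool" where
  "is_projection p \<longleftrightarrow> adj p = p \<and> p * p = p"

definition star_hom_at :: "('a::cstar_algebra \<Rightarrow> 'b::cstar_algebra) \<Rightarrow> 'a \<Rightarrow> bool" where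
  "star_hom_at T z \<longleftrightarrow>
     (\<forall>a b. a * adj b = z \<longrightarrow> T (a * adj b) = T a * adj (T b) \<and> T a * adj (T b) = T z) \<and>
     (\<forall>c d. adj c * d = z \<longrightarrow> T (adj c * d) = adj (T c) * T d \<and> adj (T c) * T d = T z)"

definition jordan_prod :: "'a::cstar_algebra \<Rightarrow> 'a \<Rightarrow> 'a" where
  "jordan_prod a b = scaleC (1/2) (a * b + b * a)"

definition jordan_star_hom :: "('a::cstar_algebra \<Rightarrow> 'b::cstar_algebra) \<Rightarrow> bool" where
  "jordan_star_hom T \<longleftrightarrow> complex_linear T \<and>
     (\<forall>a b. T (jordan_prod a b) = jordan_prod (T a) (T b)) \<and>
     (\<forall>x. T (adj x) = adj (T x))"

end

theory Submission
  imports Defs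
begin

text \<open>Write \<open>S x = T(x\<^sup>*)\<^sup>*\<close> (\<open>adj_map T\<close> below) and \<open>e = T 1\<close>. Adding the hypotheses at \<open>p\<close> and \<open>1 - p\<close>
  gives \<open>T(a) S(c) = e = S(a) T(c)\<close> whenever \<open>a c = 1\<close>. Hence \<open>e\<close> is a projection and
  \<open>T\<close> maps unitaries to unitaries of the corner \<open>e B e\<close>; as the unitaries span \<open>A\<close>, all of
  \<open>T(A)\<close> lies in that corner. For small \<open>x\<close> the inverse of \<open>1 - x\<^sup>2\<close> is the average of the
  inverses of \<open>1 \<plusminus> x\<close>, and comparing inverses in the corner yields \<open>T(x\<^sup>2) = T(x)\<^sup>2\<close>,
  i.e. the Jordan identity. Finally \<open>T u\<close> and \<open>T(u\<^sup>*)\<close> are corner unitaries with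
  Jordan product \<open>e\<close>, which forces \<open>T(u\<^sup>*) = T(u)\<^sup>*\<close>.\<close>

context cstar_algebra
begin

lemma adj_zero [simp]: "adj 0 = 0"
  using adj_add[of 0 0] by simp

lemma adj_minus [simp]: "adj (- x) = - adj x"
  using adj_add[of x "- x"] by (simp add: eq_neg_iff_add_eq_0 add.commute)

lemma adj_diff [simp]: "adj (x - y) = adj x - adj y"
  using adj_add[of x "- y"] by simp

lemma adj_scaleR [simp]: "adj (scaleR r x) = scaleR r (adj x)"
  by (simp add: scaleR_scaleC adj_scaleC)

lemma norm_adj [simp]: "norm (adj x) = norm x"
proof -
  have le: "norm y \<le> norm (adj y)" for y
  proof (cases "y = 0")
    case False
    have "(norm y)\<^sup>2 \<le> norm (adj y) * norm y"
      using cstar_identity[of y] norm_mult_ineq[of "adj y" y] by simp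
    with False show ?thesis by (simp add: power2_eq_square)
  qed simp
  show ?thesis using le[of x] le[of "adj x"] by (simp add: adj_adj)
qed

lemma adj_mult_self_eq_zero: "adj z * z = 0 \<Longrightarrow> z = 0"
  using cstar_identity[of z] by simp

lemma mult_adj_self_eq_zero: "z * adj z = 0 \<Longrightarrow> z = 0"
  using adj_mult_self_eq_zero[of "adj z"] by (metis adj_adj adj_zero)

lemma scaleC_zero_right [simp]: "scaleC c 0 = 0"
  using scaleC_add_right[of c 0 0] by simp

lemma scaleC_zero_left [simp]: "scaleC 0 x = 0"
  using scaleC_add_left[of 0 0 x] by simp

lemma scaleC_minus_left: "scaleC (- c) x = - scaleC c x"
  using scaleC_add_left[of c "- c" x] by (simp add: eq_neg_iff_add_eq_0 add.commute)

lemma scaleC_minus_right: "scaleC c (- x) = - scaleC c x"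
  using scaleC_add_right[of c x "- x"] by (simp add: eq_neg_iff_add_eq_0 add.commute)

lemma scaleC_diff_right: "scaleC c (x - y) = scaleC c x - scaleC c y"
  using scaleC_add_right[of c x "- y"] by (simp add: scaleC_minus_right)

end

lemma projection_mult_absorb_left:
  fixes e u :: "'a::cstar_algebra"
  assumes "is_projection e" and "u * adj u = e"
  shows "e * u = u"
proof -
  have e: "adj e = e" "e * e = e" using assms(1) by (simp_all add: is_projection_def)
  have "(u - e * u) * adj (u - e * u)
      = u * adj u - u * adj u * e - e * (u * adj u) + e * (u * adj u) * e"
    by (simp add: adj_mult e(1) algebra_simps)
  also have "\<dots> = 0" by (simp add: assms(2) e(2))
  finally have "(u - e * u) * adj (u - e * u) = 0" .
  then show ?thesis using mult_adj_self_eq_zero by fastforce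
qed


lemma projection_mult_absorb_right:
  fixes e u :: "'a::cstar_algebra"
  assumes "is_projection e" and "adj u * u = e"
  shows "u * e = u"
proof -
  have "e * adj u = adj u"
    using projection_mult_absorb_left[of e "adj u"] assms by (simp add: adj_adj)
  then show ?thesis
    using assms(1) by (metis adj_adj adj_mult is_projection_def)
qed

text \<open>From \<open>b\<^sup>* b = e\<close> with \<open>b = 2e - a\<close> one gets \<open>a + a\<^sup>* = 2e\<close>, hence \<open>(a - e)\<^sup>* (a - e) = 0\<close>.\<close>
lemma corner_isometry_eq_projection:
  fixes e a b :: "'a::cstar_algebra"
  assumes e: "is_projection e"
    and a: "adj a * a = e" "e * a = a" and b: "adj b * b = e"
    and sum: "a + b = e + e"
  shows "a = e"
proof -
  have ep: "adj e = e" "e * e = e" using e by (simp_all add: is_projection_def)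
  have ae: "a * e = a" using projection_mult_absorb_right[OF e a(1)] .
  have ae': "adj a * e = adj a" using arg_cong[OF a(2), of adj] by (simp add: adj_mult ep)
  have "b = e + e - a" using sum by (simp add: algebra_simps)
  then have "e = adj (e + e - a) * (e + e - a)" using b by simp
  also have "\<dots> = e + e + e + e + e - (a + adj a) - (a + adj a)"
    by (simp add: adj_add ep algebra_simps a ae ae')
  finally have "scaleR 2 (a + adj a - (e + e)) = 0" by (simp add: scaleR_2 algebra_simps)
  then have "a + adj a = e + e" by simp
  then have "adj (a - e) * (a - e) = 0"
    by (simp add: ep algebra_simps a ae')
  then show ?thesis using adj_mult_self_eq_zero by fastforce
qed

lemma adj_one [simp]: "adj (1::'a::cstar_algebra_1) = 1"
  by (metis adj_adj adj_mult mult_1_left mult_1_right)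

lemma adj_power: "adj ((y::'a::cstar_algebra_1) ^ n) = adj y ^ n"
  by (induction n) (simp_all add: adj_mult power_commutes)

instance cstar_algebra_1 \<subseteq> real_normed_algebra_1
proof
  have "norm (1::'a) = (norm (1::'a))\<^sup>2" using cstar_identity[of "1::'a"] by simp
  then show "norm (1::'a) = 1" by (simp add: power2_eq_square)
qed

lemma one_minus_invertible:
  fixes y :: "'a::{real_normed_algebra_1,banach}"
  assumes "norm y < 1"
  obtains g where "(1 - y) * g = 1" and "g * (1 - y) = 1"
proof -
  have sm: "summable (\<lambda>n. y ^ n)" using complete_algebra_summable_geometric[OF assms] .
  define g where "g = (\<Sum>n. y ^ n)"
  have "(\<Sum>n. y ^ Suc n) = g - 1"
    unfolding g_def using suminf_split_head[OF sm] by simp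
  moreover have "y * g = (\<Sum>n. y ^ Suc n)"
    unfolding g_def power_Suc by (rule suminf_mult[OF sm, symmetric])
  moreover have "g * y = (\<Sum>n. y ^ Suc n)"
    unfolding g_def power_Suc2 using suminf_mult2[OF sm] by simp
  ultimately have "(1 - y) * g = 1" "g * (1 - y) = 1"
    by (simp_all add: left_diff_distrib right_diff_distrib)
  then show ?thesis by (rule that)
qed

lemma abs_gbinomial_half_le_one: "\<bar>(1/2::real) gchoose n\<bar> \<le> 1"
proof (induction n)
  case (Suc n)
  have "of_nat (Suc n) * ((1/2::real) gchoose Suc n) = (1/2 - of_nat n) * ((1/2) gchoose n)"
    using gbinomial_mult_1[of "1/2::real" n] by (simp add: algebra_simps)
  then have "of_nat (Suc n) * \<bar>(1/2::real) gchoose Suc n\<bar> = \<bar>1/2 - of_nat n\<bar> * \<bar>(1/2) gchoose n\<bar>"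
    by (metis abs_mult abs_of_nat)
  also have "\<dots> \<le> of_nat (Suc n) * 1"
    using Suc.IH by (intro mult_mono) auto
  finally show ?case by simp
qed simp

lemma gbinomial_half_convolution:
  "(\<Sum>i\<le>n. ((1/2::real) gchoose i) * ((1/2) gchoose (n - i))) = of_nat (1 choose n)"
proof -
  have "(\<Sum>i\<le>n. ((1/2::real) gchoose i) * ((1/2) gchoose (n - i))) = (1/2 + 1/2) gchoose n"
    using gbinomial_Vandermonde[of "1/2::real" "1/2" n] by (simp add: atLeast0AtMost)
  also have "\<dots> = of_nat (1 choose n)" by (simp add: binomial_gbinomial)
  finally show ?thesis .
qed

text \<open>The binomial series of \<open>(1 - y)\<^sup>1\<^sup>/\<^sup>2\<close>; its square is
  \<open>\<Sum> (1 gchoose n) (-y)\<^sup>n = 1 - y\<close> by the Cauchy product and Vandermonde.\<close>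
lemma binomial_sqrt_series:
  fixes y :: "'a::{real_normed_algebra_1,banach}"
  assumes ny: "norm y < 1"
  defines "f \<equiv> \<lambda>n. scaleR (((1/2::real) gchoose n) * (-1) ^ n) (y ^ n)"
  shows "summable (\<lambda>n. norm (f n))" and "suminf f * suminf f = 1 - y"
proof -
  have "norm (f n) \<le> norm y ^ n" for n
  proof -
    have "norm (f n) = \<bar>(1/2::real) gchoose n\<bar> * norm (y ^ n)" by (simp add: f_def abs_mult)
    also have "\<dots> \<le> 1 * norm y ^ n"
      using abs_gbinomial_half_le_one[of n] by (intro mult_mono) (auto simp: norm_power_ineq)
    finally show ?thesis by simp
  qed
  then show sn: "summable (\<lambda>n. norm (f n))"
    using ny by (intro summable_comparison_test[OF _ summable_geometric[of "norm y"]]) auto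
  have conv: "(\<Sum>i\<le>n. f i * f (n - i)) = scaleR ((-1) ^ n * of_nat (1 choose n)) (y ^ n)" for n
  proof -
    have "(\<Sum>i\<le>n. f i * f (n - i))
        = (\<Sum>i\<le>n. scaleR ((-1) ^ n * (((1/2) gchoose i) * ((1/2) gchoose (n - i)))) (y ^ n))"
    proof (rule sum.cong)
      fix i assume "i \<in> {..n}"
      then have "(-1::real) ^ i * (-1) ^ (n - i) = (-1) ^ n" and "y ^ i * y ^ (n - i) = y ^ n"
        by (simp_all flip: power_add)
      then show "f i * f (n - i) = scaleR ((-1) ^ n * (((1/2) gchoose i) * ((1/2) gchoose (n - i)))) (y ^ n)"
        by (simp add: f_def mult_ac)
    qed simp
    also have "\<dots> = scaleR ((-1) ^ n * (\<Sum>i\<le>n. ((1/2) gchoose i) * ((1/2) gchoose (n - i)))) (y ^ n)"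
      by (simp add: scaleR_sum_left sum_distrib_left)
    finally show ?thesis by (simp only: gbinomial_half_convolution)
  qed
  have "(\<lambda>n. \<Sum>i\<le>n. f i * f (n - i)) sums (suminf f * suminf f)"
    by (rule Cauchy_product_sums[OF sn sn])
  moreover have "(\<lambda>n. scaleR ((-1) ^ n * of_nat (1 choose n)) (y ^ n)) sums
      (\<Sum>n\<in>{0,1}. scaleR ((-1) ^ n * of_nat (1 choose n)) (y ^ n))"
    by (rule sums_finite) (auto simp: binomial_eq_0)
  ultimately show "suminf f * suminf f = 1 - y"
    unfolding conv by (simp add: sums_unique2)
qed

lemma bounded_linear_adj: "bounded_linear (adj :: 'a::cstar_algebra \<Rightarrow> 'a)"
  by (rule bounded_linear_intro[where K = 1]) (simp_all add: adj_add)

lemma selfadjoint_sqrt_one_minus: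
  fixes y :: "'a::cstar_algebra_1"
  assumes sa: "adj y = y" and ny: "norm y < 1"
  obtains k where "adj k = k" and "k * k = 1 - y" and "\<And>z. z * y = y * z \<Longrightarrow> z * k = k * z"
proof -
  define f where "f n = scaleR (((1/2::real) gchoose n) * (-1) ^ n) (y ^ n)" for n
  have sf: "summable f" and square: "suminf f * suminf f = 1 - y"
    using binomial_sqrt_series[OF ny] unfolding f_def[abs_def] by (auto intro: summable_norm_cancel)
  have "adj (suminf f) = (\<Sum>n. adj (f n))"
    by (rule bounded_linear.suminf[OF bounded_linear_adj sf])
  also have "(\<lambda>n. adj (f n)) = f"
    by (simp add: fun_eq_iff f_def sa adj_power)
  finally have "adj (suminf f) = suminf f" .
  moreover note square
  moreover have "z * suminf f = suminf f * z" if zy: "z * y = y * z" for z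
  proof -
    have "z * y ^ n = y ^ n * z" for n
      by (induction n) (simp_all add: zy flip: mult.assoc, simp_all add: mult.assoc zy)
    then have "(\<Sum>n. z * f n) = (\<Sum>n. f n * z)" by (simp add: f_def)
    then show ?thesis by (simp add: suminf_mult[OF sf] suminf_mult2[OF sf])
  qed
  ultimately show ?thesis by (rule that)
qed

definition is_unitary :: "'a::cstar_algebra_1 \<Rightarrow> bool" where
  "is_unitary u \<longleftrightarrow> u * adj u = 1 \<and> adj u * u = 1"

lemma is_unitary_adj: "is_unitary u \<Longrightarrow> is_unitary (adj u)"
  by (simp add: is_unitary_def adj_adj)

lemma scaleC_ii: "scaleC \<i> (scaleC \<i> x) = - (x::'a::cstar_algebra)"
  by (simp add: scaleC_scaleC scaleC_minus_left scaleC_one)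

lemma selfadjoint_real_part_of_unitary:
  fixes h :: "'a::cstar_algebra_1"
  assumes sa: "adj h = h" and nh: "norm h < 1"
  obtains u where "is_unitary u" and "u + adj u = h + h"
proof -
  have "norm (h * h) \<le> (norm h)\<^sup>2" by (simp add: norm_mult_ineq power2_eq_square)
  also have "\<dots> < 1" using nh by (simp add: abs_square_less_1)
  finally obtain k where k: "adj k = k" "k * k = 1 - h * h" "h * k = k * h"
    using selfadjoint_sqrt_one_minus[of "h * h"] sa by (metis adj_mult mult.assoc)
  define u where "u = h + scaleC \<i> k"
  have au: "adj u = h - scaleC \<i> k"
    by (simp add: u_def adj_add adj_scaleC sa k(1) scaleC_minus_left)
  have "u * adj u = 1" "adj u * u = 1"
    unfolding au unfolding u_def
    by (simp_all add: algebra_simps scaleC_mult_left scaleC_mult_right scaleC_add_right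
        scaleC_diff_right scaleC_ii k(2,3))
  moreover have "u + adj u = h + h" unfolding au by (simp add: u_def)
  ultimately show ?thesis using that by (simp add: is_unitary_def)
qed

lemma unitary_span_induct [case_names add scale unitary]:
  fixes x :: "'a::cstar_algebra_1"
  assumes add: "\<And>x y. P x \<Longrightarrow> P y \<Longrightarrow> P (x + y)"
    and scale: "\<And>c x. P x \<Longrightarrow> P (scaleC c x)"
    and unitary: "\<And>u. is_unitary u \<Longrightarrow> P u"
  shows "P x"
proof -
  have selfadjoint: "P h" if sa: "adj h = h" for h :: 'a
  proof -
    define r where "r = 2 * (norm h + 1)"
    have r: "r > 0" by (simp add: r_def add_nonneg_pos)
    have "norm h < r" by (simp add: r_def add_nonneg_pos)
    then have "norm (scaleR (1 / r) h) < 1" using r by simp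
    moreover have "adj (scaleR (1 / r) h) = scaleR (1 / r) h" by (simp add: sa)
    ultimately obtain u where u: "is_unitary u" "u + adj u = scaleR (2 / r) h"
      using selfadjoint_real_part_of_unitary by (metis scaleR_2 scaleR_scaleR times_divide_eq_right mult_1_right)
    have "h = scaleC (of_real (r / 2)) (u + adj u)"
      using r by (simp add: u(2) scaleR_scaleC scaleC_scaleC scaleC_one flip: of_real_mult)
    then show ?thesis using u by (metis add scale unitary is_unitary_adj)
  qed
  have "adj (scaleC (1/2) (x + adj x)) = scaleC (1/2) (x + adj x)"
    by (simp add: adj_scaleC adj_add adj_adj add.commute)
  moreover have "adj (scaleC (- \<i>/2) (x - adj x)) = scaleC (- \<i>/2) (x - adj x)"
    by (simp add: adj_scaleC adj_adj scaleC_diff_right scaleC_minus_left)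
  moreover have "x = scaleC (1/2) (x + adj x) + scaleC \<i> (scaleC (- \<i>/2) (x - adj x))"
    by (simp add: scaleC_scaleC scaleC_add_right scaleC_diff_right scaleC_one flip: scaleC_add_left)
  ultimately show ?thesis by (metis add scale selfadjoint)
qed

definition adj_map :: "('a::cstar_algebra \<Rightarrow> 'b::cstar_algebra) \<Rightarrow> 'a \<Rightarrow> 'b" where
  "adj_map T x = adj (T (adj x))"

lemma star_hom_at_mult_right_inverse:
  fixes T :: "'a::cstar_algebra_1 \<Rightarrow> 'b::cstar_algebra"
  assumes "star_hom_at T z" and "a * c = 1"
  shows "T (z * a) * adj_map T c = T z" and "adj_map T (z * a) * T c = T z"
proof -
  have zac: "z * a * c = z" by (simp add: mult.assoc assms(2))
  then show "T (z * a) * adj_map T c = T z"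
    using assms(1) unfolding star_hom_at_def adj_map_def by (metis adj_adj)
  show "adj_map T (z * a) * T c = T z"
    using zac assms(1) unfolding star_hom_at_def adj_map_def by (metis adj_adj)
qed

text \<open>Only \<open>p + (1 - p) = 1\<close> enters here.\<close>
lemma star_hom_at_complements_inverse:
  fixes T :: "'a::cstar_algebra_1 \<Rightarrow> 'b::cstar_algebra"
  assumes lin: "complex_linear T"
    and "star_hom_at T p" and "star_hom_at T (1 - p)" and "a * c = 1"
  shows "T a * adj_map T c = T 1" and "adj_map T a * T c = T 1"
proof -
  have T_add: "T (x + y) = T x + T y" for x y using lin by (simp add: complex_linear_def)
  have adj_map_add: "adj_map T (x + y) = adj_map T x + adj_map T y" for x y
    by (simp add: adj_map_def adj_add T_add)
  have a: "a = p * a + (1 - p) * a" by (simp add: algebra_simps)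
  have "T a * adj_map T c = T (p * a) * adj_map T c + T ((1 - p) * a) * adj_map T c"
    by (subst a) (simp add: T_add distrib_right)
  also have "\<dots> = T 1"
    using assms(2-4) by (simp add: star_hom_at_mult_right_inverse flip: T_add)
  finally show "T a * adj_map T c = T 1" .
  have "adj_map T a * T c = adj_map T (p * a) * T c + adj_map T ((1 - p) * a) * T c"
    by (subst a) (simp add: adj_map_add distrib_right)
  also have "\<dots> = T 1"
    using assms(2-4) by (simp add: star_hom_at_mult_right_inverse flip: T_add)
  finally show "adj_map T a * T c = T 1" .
qed

locale inverse_preserving =
  fixes T :: "'a::cstar_algebra_1 \<Rightarrow> 'b::cstar_algebra"
  assumes linear: "complex_linear T"
    and mult_adj_map_inverse: "a * c = 1 \<Longrightarrow> T a * adj_map T c = T 1"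
    and adj_map_mult_inverse: "a * c = 1 \<Longrightarrow> adj_map T a * T c = T 1"
begin

abbreviation (input) e :: 'b where "e \<equiv> T 1"

lemma add: "T (x + y) = T x + T y"
  using linear by (simp add: complex_linear_def)

lemma scaleC: "T (scaleC c x) = scaleC c (T x)"
  using linear by (simp add: complex_linear_def)

lemma diff: "T (x - y) = T x - T y"
  using add[of "x - y" y] by simp

lemma scaleR: "T (scaleR r x) = scaleR r (T x)"
  by (simp add: scaleR_scaleC scaleC)

lemma projection_one: "is_projection e"
proof -
  have "e * adj e = e" using mult_adj_map_inverse[of 1 1] by (simp add: adj_map_def)
  moreover from this have "adj e = e" by (metis adj_adj adj_mult)
  ultimately show ?thesis by (simp add: is_projection_def)
qed

lemma unitary_image:
  assumes "is_unitary u"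
  shows "T u * adj (T u) = e" and "adj (T u) * T u = e"
  using mult_adj_map_inverse[of u "adj u"] adj_map_mult_inverse[of "adj u" u] assms
  by (simp_all add: is_unitary_def adj_map_def adj_adj)

lemma projection_one_absorb: "e * T x = T x \<and> T x * e = T x"
proof (induction x rule: unitary_span_induct)
  case (unitary u)
  then show ?case
    using projection_mult_absorb_left projection_mult_absorb_right projection_one unitary_image
    by blast
qed (simp_all add: add scaleC distrib_left distrib_right scaleC_mult_left scaleC_mult_right)

lemma one_mult: "e * T x = T x" and mult_one: "T x * e = T x"
  using projection_one_absorb by simp_all

lemma adj_map_add: "adj_map T (x + y) = adj_map T x + adj_map T y"
  by (simp add: adj_map_def adj_add add)

lemma adj_map_scaleR: "adj_map T (scaleR r x) = scaleR r (adj_map T x)"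
  by (simp add: adj_map_def scaleR)

text \<open>\<open>m = (g\<^sub>1 + g\<^sub>2)/2\<close>, with \<open>g\<^sub>1, g\<^sub>2\<close> the inverses of \<open>1 \<plusminus> x\<close>, is a left inverse
  of \<open>1 - x\<^sup>2\<close>; so \<open>adj_map T m\<close> is a left inverse of \<open>T (1 - x\<^sup>2)\<close> and a right inverse of
  \<open>e - (T x)\<^sup>2\<close> in the corner of \<open>e\<close>, and these two must coincide.\<close>
lemma mult_self_of_norm_less_one:
  assumes "norm x < 1"
  shows "T (x * x) = T x * T x"
proof -
  obtain g1 where g1: "(1 + x) * g1 = 1" "g1 * (1 + x) = 1"
    using one_minus_invertible[of "- x"] assms by auto
  obtain g2 where g2: "(1 - x) * g2 = 1" "g2 * (1 - x) = 1"
    using one_minus_invertible[of x] assms by auto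
  define m where "m = scaleR (1/2) (g1 + g2)"
  have f: "1 - x * x = (1 + x) * (1 - x)" "1 - x * x = (1 - x) * (1 + x)"
    by (simp_all add: algebra_simps)
  have "g1 * (1 - x * x) = 1 - x"
    unfolding f(1) by (simp add: g1(2) flip: mult.assoc)
  moreover have "g2 * (1 - x * x) = 1 + x"
    unfolding f(2) by (simp add: g2(2) flip: mult.assoc)
  ultimately have "m * (1 - x * x) = scaleR (1/2) (scaleR 2 1)"
    by (simp add: m_def distrib_right scaleR_2)
  then have m: "m * (1 - x * x) = 1" by simp
  define X where "X = T x"
  have eX: "e * X = X" "X * e = X" by (simp_all add: X_def one_mult mult_one)
  have ee: "e * e = e" using projection_one by (simp add: is_projection_def)
  have factor: "e - X * X = (e - X) * T (1 + x)" "e - X * X = (e + X) * T (1 - x)"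
    by (simp_all add: add diff flip: X_def) (simp_all add: algebra_simps eX ee)
  have "(e - X * X) * adj_map T g1 = (e - X) * (T (1 + x) * adj_map T g1)"
    by (simp add: factor(1) mult.assoc)
  then have h1: "(e - X * X) * adj_map T g1 = e - X"
    by (simp add: mult_adj_map_inverse[OF g1(1)] left_diff_distrib eX ee)
  have "(e - X * X) * adj_map T g2 = (e + X) * (T (1 - x) * adj_map T g2)"
    by (simp add: factor(2) mult.assoc)
  then have h2: "(e - X * X) * adj_map T g2 = e + X"
    by (simp add: mult_adj_map_inverse[OF g2(1)] distrib_right eX ee)
  have right_inv: "(e - X * X) * adj_map T m = e"
    by (simp add: m_def adj_map_scaleR adj_map_add distrib_left h1 h2 scaleR_2 flip: scaleR_add_right)
  have "T (1 - x * x) = ((e - X * X) * adj_map T m) * T (1 - x * x)"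
    by (simp add: right_inv one_mult)
  also have "\<dots> = e - X * X"
    by (simp add: mult.assoc adj_map_mult_inverse[OF m] mult_one eX ee algebra_simps)
  finally show ?thesis by (simp add: diff X_def)
qed

lemma mult_self: "T (x * x) = T x * T x"
proof -
  define t where "t = 1 / (norm x + 1)"
  have t: "t > 0" by (simp add: t_def add_nonneg_pos)
  have "norm (scaleR t x) < 1" by (simp add: t_def add_nonneg_pos)
  then have "T (scaleR t x * scaleR t x) = T (scaleR t x) * T (scaleR t x)"
    by (rule mult_self_of_norm_less_one)
  then have "scaleR (t * t) (T (x * x)) = scaleR (t * t) (T x * T x)" by (simp add: scaleR)
  with t show ?thesis by simp
qed

lemma jordan: "T (x * y + y * x) = T x * T y + T y * T x"
proof -
  have "x * y + y * x = (x + y) * (x + y) - x * x - y * y" by (simp add: algebra_simps)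
  then have "T (x * y + y * x) = (T x + T y) * (T x + T y) - T x * T x - T y * T y"
    by (simp add: diff add mult_self flip: add)
  then show ?thesis by (simp add: algebra_simps)
qed

text \<open>\<open>T u T(u\<^sup>*)\<close> and \<open>T(u\<^sup>*) T u\<close> are corner isometries averaging to \<open>e\<close>
  by the Jordan identity.\<close>
lemma adj_unitary:
  assumes u: "is_unitary u"
  shows "T (adj u) = adj (T u)"
proof -
  define V W where "V = T u" and "W = T (adj u)"
  have V: "V * adj V = e" "adj V * V = e" using unitary_image[OF u] by (simp_all add: V_def)
  have W: "adj W * W = e" using unitary_image[OF is_unitary_adj[OF u]] by (simp add: W_def)
  have eW: "e * W = W" and eV: "e * V = V" and Ve: "V * e = V"
    by (simp_all add: W_def V_def one_mult mult_one)
  have sum: "V * W + W * V = e + e"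
    using jordan[of u "adj u"] u by (simp add: V_def W_def is_unitary_def add)
  have "adj (V * W) * (V * W) = adj W * ((adj V * V) * W)"
    by (simp add: adj_mult mult.assoc)
  then have iso1: "adj (V * W) * (V * W) = e" by (simp add: V(2) eW W)
  have "adj (W * V) * (W * V) = adj V * ((adj W * W) * V)"
    by (simp add: adj_mult mult.assoc)
  then have iso2: "adj (W * V) * (W * V) = e" by (simp add: W eV V(2))
  have "e * (V * W) = V * W" by (simp add: eV flip: mult.assoc)
  then have VW: "V * W = e"
    using corner_isometry_eq_projection[OF projection_one iso1 _ iso2 sum] by blast
  have ep: "adj e = e" using projection_one by (simp add: is_projection_def)
  have "W = (adj V * V) * W" by (simp add: V(2) eW)
  also have "\<dots> = adj (e * V)" by (simp add: mult.assoc VW adj_mult ep)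
  also have "\<dots> = adj V" by (simp add: eV)
  finally show ?thesis by (simp add: V_def W_def)
qed

lemma adj: "T (adj x) = adj (T x)"
proof (induction x rule: unitary_span_induct)
  case (scale c x)
  then show ?case by (simp add: adj_scaleC scaleC)
qed (simp_all add: adj_add add adj_unitary)

lemma jordan_star_hom: "jordan_star_hom T"
  unfolding jordan_star_hom_def jordan_prod_def
  by (simp add: linear scaleC jordan adj)

end

theorem corollary2p12:
  fixes T :: "'a::cstar_algebra_1 \<Rightarrow> 'b::cstar_algebra"
    and p :: 'a
  assumes "is_projection p"
    and "complex_linear T"
    and "star_hom_at T p"
    and "star_hom_at T (1 - p)"
  shows "jordan_star_hom T"
proof -
  interpret inverse_preserving T
    using assms(2) star_hom_at_complements_inverse[OF assms(2-4)] by unfold_locales blast+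
  show ?thesis by (rule jordan_star_hom)
qed

end
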